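(* Let $t_n=n(\log n)^{3/4}$. Then $$\lim_{n\to\infty}\frac{T_n^{t_n}}{\mathbb E(T_n^{t_n})}=1\quad\lambda\text{-almost surely}.$$
   Context: Let $\lambda$ be Lebesgue measure on $[0,1)$, $\tau(x)=2x\bmod1$, $\chi(x)=\lfloor1/x\rfloor$, $a_n=\chi\circ\tau^{n-1}$. For $r\ge1$ define $a_i^r=a_i\mathbb 1_{\{a_i\le r\}}$ and $T_n^r=\sum_{i=1}^n a_i^r$. Expectations are with respect to $\lambda$; logarithms are natural. *)

theory Defs
  imports "HOL-Probability.Probability"
begin

definition lam :: "real measure" where
  "lam = restrict_space lborel {0..<1}"

definition tau :: "real \<Rightarrow> real" where
  "tau x = frac (2 * x)"

text \<open>chi(x) = floor(1/x) (for x = 0 this gives 0 by 1/0 = 0; a null set).\<close>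
definition chi :: "real \<Rightarrow> real" where
  "chi x = of_int \<lfloor>1 / x\<rfloor>"

definition digit :: "nat \<Rightarrow> real \<Rightarrow> real" where
  "digit n x = chi ((tau ^^ (n - 1)) x)"

definition trunc_digit :: "real \<Rightarrow> nat \<Rightarrow> real \<Rightarrow> real" where
  "trunc_digit r i x = (if digit i x \<le> r then digit i x else 0)"

definition T :: "nat \<Rightarrow> real \<Rightarrow> real \<Rightarrow> real" where
  "T n r x = (\<Sum>i=1..n. trunc_digit r i x)"

definition t_seq :: "nat \<Rightarrow> real" where
  "t_seq n = real n * (ln (real n)) powr (3/4)"

end

theory Submission
  imports Defs "HOL-Real_Asymp.Real_Asymp"
begin

text \<open>
  The digits \<open>a\<^sub>i = \<chi> \<circ> \<tau>\<^sup>i\<^sup>-\<^sup>1\<close> form a stationary sequence under \<open>\<lambda>\<close>, and the transfer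
  operator \<open>P F z = (F (z/2) + F ((z+1)/2)) / 2\<close> of the doubling map, dual to composition with
  \<open>\<tau>\<close>, halves the oscillation of every monotone function. The truncated digit
  \<open>f\<^sub>K = \<chi> \<one>{\<chi> \<le> K}\<close> is a difference of two decreasing functions with values in \<open>[0, K]\<close>, so the
  correlation of \<open>f\<^sub>K\<close> and \<open>f\<^sub>K \<circ> \<tau>\<^sup>d\<close> is at most \<open>min K (2 K m\<^sub>K / 2\<^sup>d)\<close>, where
  \<open>m\<^sub>K = E f\<^sub>K \<sim> log K\<close>. Summing over \<open>d\<close> gives \<open>Var T\<^sub>n\<^sup>t \<le> C n t log log t\<close>, whereas
  \<open>E T\<^sub>n\<^sup>t \<sim> n log t\<close>; for \<open>t = t\<^sub>n\<close> Chebyshev's inequality bounds the probability of a relative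
  deviation \<open>\<epsilon>\<close> by \<open>C \<epsilon>\<^sup>-\<^sup>2 (log n)\<^sup>-\<^sup>1\<^sup>9\<^sup>/\<^sup>1\<^sup>6\<close>. This is summable along \<open>n\<^sub>k \<approx> exp (k\<^sup>9\<^sup>/\<^sup>1\<^sup>0)\<close>,
  so Borel--Cantelli gives the limit along \<open>n\<^sub>k\<close>. Both \<open>T\<^sub>n\<^sup>t\<^sup>n\<close> and its mean increase with \<open>n\<close> and
  the means at consecutive \<open>n\<^sub>k\<close> have ratio tending to 1, which interpolates the limit to all \<open>n\<close>.
\<close>

lemma prob_space_lam: "prob_space lam"
  unfolding lam_def by (rule prob_space_restrict_space) auto

interpretation L: prob_space lam
  by (rule prob_space_lam)

lemma space_lam [simp]: "space lam = {0..<1}"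
  unfolding lam_def by (simp add: space_restrict_space)

lemma measure_lam_unit [simp]: "measure lam {0..<1} = 1"
  using L.prob_space by simp

lemma borel_measurable_chi [measurable]: "chi \<in> borel_measurable borel"
  unfolding chi_def by measurable

lemma borel_measurable_tau [measurable]: "tau \<in> borel_measurable borel"
  unfolding tau_def frac_def by measurable

lemma borel_measurable_funpow_tau [measurable]: "(tau ^^ n) \<in> borel_measurable borel"
  by (induction n) auto

lemma measurable_lam_borel: "f \<in> borel_measurable borel \<Longrightarrow> f \<in> borel_measurable lam"
  unfolding lam_def by (simp add: measurable_restrict_space1)

lemma tau_nonneg [simp]: "0 \<le> tau x" and tau_less_1 [simp]: "tau x < 1"
  unfolding tau_def by (simp_all add: frac_lt_1)

lemma funpow_tau_in_unit: "x \<in> {0..<1} \<Longrightarrow> (tau ^^ n) x \<in> {0..<1}"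
  by (cases n) auto

lemma tau_affine_half:
  assumes "c \<in> {0, 1/2}" "z \<in> {0..<1}"
  shows "tau (c + z/2) = z"
proof -
  have "2 * (c + z/2) = z \<or> 2 * (c + z/2) = z + 1" using assms(1) by auto
  then show ?thesis
    unfolding tau_def using assms(2) frac_eq[of z] frac_1_eq[of z] by (auto simp: add.commute)
qed

lemma integral_lam_lborel: "integral\<^sup>L lam (f::real\<Rightarrow>real) = (\<integral>x. indicator {0..<1} x * f x \<partial>lborel)"
  unfolding lam_def by (subst integral_restrict_space) auto

lemma integral_lam_affine_half:
  fixes h :: "real \<Rightarrow> real" and c :: real
  assumes "c \<in> {0, 1/2}"
  shows "(\<integral>y. indicator {c..<c+1/2} y * h y \<partial>lam) = (1/2) * (\<integral>z. h (c + z/2) \<partial>lam)"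
proof -
  have "(\<integral>y. indicator {c..<c+1/2} y * h y \<partial>lam)
      = (\<integral>y. indicator {0..<1} y * (indicator {c..<c+1/2} y * h y) \<partial>lborel)"
    by (simp add: integral_lam_lborel)
  also have "\<dots> = \<bar>1/2\<bar> *\<^sub>R (\<integral>z. indicator {0..<1} (c + 1/2*z) *
      (indicator {c..<c+1/2} (c + 1/2*z) * h (c + 1/2*z)) \<partial>lborel)"
    by (rule lborel_integral_real_affine) simp
  also have "(\<lambda>z. indicator {0..<1} (c + 1/2*z) * (indicator {c..<c+1/2} (c + 1/2*z) * h (c + 1/2*z)))
      = (\<lambda>z. indicator {0..<1} z * h (c + z/2)::real)"
    using assms by (auto simp: indicator_def fun_eq_iff)
  finally show ?thesis by (simp add: integral_lam_lborel)
qed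

definition bounded_borel :: "(real \<Rightarrow> real) \<Rightarrow> bool" where
  "bounded_borel F \<longleftrightarrow> F \<in> borel_measurable borel \<and> (\<exists>B. \<forall>x\<in>{0..<1}. \<bar>F x\<bar> \<le> B)"

lemma bounded_borelI:
  "F \<in> borel_measurable borel \<Longrightarrow> (\<And>x. x \<in> {0..<1} \<Longrightarrow> \<bar>F x\<bar> \<le> B) \<Longrightarrow> bounded_borel F"
  unfolding bounded_borel_def by blast

lemma bounded_borelE:
  assumes "bounded_borel F"
  obtains B where "F \<in> borel_measurable borel" "\<And>x. x \<in> {0..<1} \<Longrightarrow> \<bar>F x\<bar> \<le> B"
  using assms unfolding bounded_borel_def by blast

lemma bounded_borel_integrable: "bounded_borel F \<Longrightarrow> integrable lam F"
proof (elim bounded_borelE)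
  fix B assume "F \<in> borel_measurable borel" "\<And>x. x \<in> {0..<1} \<Longrightarrow> \<bar>F x\<bar> \<le> B"
  then show ?thesis by (intro L.integrable_const_bound[where B=B]) (auto intro!: measurable_lam_borel)
qed

lemma bounded_borel_const: "bounded_borel (\<lambda>x. c)"
  by (rule bounded_borelI[of _ "\<bar>c\<bar>"]) auto

lemma bounded_borel_add: "bounded_borel F \<Longrightarrow> bounded_borel G \<Longrightarrow> bounded_borel (\<lambda>x. F x + G x)"
proof (elim bounded_borelE)
  fix A B
  assume "F \<in> borel_measurable borel" "\<And>x. x \<in> {0..<1} \<Longrightarrow> \<bar>F x\<bar> \<le> A"
    "G \<in> borel_measurable borel" "\<And>x. x \<in> {0..<1} \<Longrightarrow> \<bar>G x\<bar> \<le> B"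
  then show ?thesis
    by (intro bounded_borelI[of _ "A + B"]) (auto intro: abs_triangle_ineq[THEN order_trans] add_mono)
qed

lemma bounded_borel_mult: "bounded_borel F \<Longrightarrow> bounded_borel G \<Longrightarrow> bounded_borel (\<lambda>x. F x * G x)"
proof (elim bounded_borelE)
  fix A B
  assume "F \<in> borel_measurable borel" "\<And>x. x \<in> {0..<1} \<Longrightarrow> \<bar>F x\<bar> \<le> A"
    "G \<in> borel_measurable borel" "\<And>x. x \<in> {0..<1} \<Longrightarrow> \<bar>G x\<bar> \<le> B"
  moreover have "0 \<le> A" using \<open>\<And>x. x \<in> {0..<1} \<Longrightarrow> \<bar>F x\<bar> \<le> A\<close>[of 0] by simp
  ultimately show ?thesis
    by (intro bounded_borelI[of _ "A * B"]) (auto simp: abs_mult intro!: mult_mono)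
qed

lemma bounded_borel_diff: "bounded_borel F \<Longrightarrow> bounded_borel G \<Longrightarrow> bounded_borel (\<lambda>x. F x - G x)"
  using bounded_borel_add[of F "\<lambda>x. (-1) * G x"] bounded_borel_mult[OF bounded_borel_const[of "-1"], of G]
  by simp

lemma bounded_borel_sum:
  "(\<And>i. i \<in> A \<Longrightarrow> bounded_borel (F i)) \<Longrightarrow> bounded_borel (\<lambda>x. \<Sum>i\<in>A. F i x)"
  by (induction A rule: infinite_finite_induct) (auto intro: bounded_borel_const bounded_borel_add)

lemma bounded_borel_comp_funpow_tau: "bounded_borel G \<Longrightarrow> bounded_borel (\<lambda>x. G ((tau ^^ n) x))"
proof (elim bounded_borelE)
  fix B assume "G \<in> borel_measurable borel" "\<And>x. x \<in> {0..<1} \<Longrightarrow> \<bar>G x\<bar> \<le> B"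
  then show ?thesis by (intro bounded_borelI[of _ B]) (auto simp del: atLeastLessThan_iff intro: funpow_tau_in_unit)
qed

lemma bounded_borel_comp_half:
  assumes "bounded_borel F" "c \<in> {0, 1/2}"
  shows "bounded_borel (\<lambda>z. F (c + z/2))"
  using assms(1)
proof (elim bounded_borelE)
  fix B assume "F \<in> borel_measurable borel" "\<And>x. x \<in> {0..<1} \<Longrightarrow> \<bar>F x\<bar> \<le> B"
  then show ?thesis
    using assms(2) by (intro bounded_borelI[of _ B]) auto
qed

section \<open>The transfer operator of the doubling map\<close>

definition transfer_op :: "(real \<Rightarrow> real) \<Rightarrow> real \<Rightarrow> real" where
  "transfer_op F z = (F (z/2) + F (1/2 + z/2)) / 2"

lemma bounded_borel_transfer_op: "bounded_borel F \<Longrightarrow> bounded_borel (transfer_op F)"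
proof (elim bounded_borelE)
  fix B assume F: "F \<in> borel_measurable borel" "\<And>x. x \<in> {0..<1} \<Longrightarrow> \<bar>F x\<bar> \<le> B"
  show ?thesis
  proof (rule bounded_borelI)
    show "transfer_op F \<in> borel_measurable borel"
      unfolding transfer_op_def[abs_def] using F(1) by measurable
    fix x :: real assume "x \<in> {0..<1}"
    then have "\<bar>F (x/2)\<bar> \<le> B" "\<bar>F (1/2 + x/2)\<bar> \<le> B" using F(2) by auto
    then show "\<bar>transfer_op F x\<bar> \<le> B"
      unfolding transfer_op_def by (simp only: abs_le_iff) (auto simp: field_simps)
  qed
qed

lemma bounded_borel_funpow_transfer_op: "bounded_borel F \<Longrightarrow> bounded_borel ((transfer_op ^^ n) F)"
  by (induction n) (auto intro: bounded_borel_transfer_op)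

lemma integral_mult_comp_tau:
  assumes F: "bounded_borel F" and G: "bounded_borel G"
  shows "(\<integral>y. F y * G (tau y) \<partial>lam) = (\<integral>z. transfer_op F z * G z \<partial>lam)"
proof -
  let ?h = "\<lambda>y. F y * G (tau y)"
  have h: "bounded_borel ?h"
    using bounded_borel_mult[OF F bounded_borel_comp_funpow_tau[OF G, of 1]] by simp
  have half: "(\<integral>y. indicator {c..<c+1/2} y * ?h y \<partial>lam) = (1/2) * (\<integral>z. F (c + z/2) * G z \<partial>lam)"
    if c: "c \<in> {0, 1/2}" for c
  proof -
    have "(\<integral>z. ?h (c + z/2) \<partial>lam) = (\<integral>z. F (c + z/2) * G z \<partial>lam)"
      using c by (intro Bochner_Integration.integral_cong) (auto simp: tau_affine_half)
    then show ?thesis by (simp add: integral_lam_affine_half[OF c])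
  qed
  have int_half: "integrable lam (\<lambda>z. F (c + z/2) * G z)" if "c \<in> {0, 1/2}" for c
    by (intro bounded_borel_integrable bounded_borel_mult bounded_borel_comp_half F G that)
  have int_ind: "integrable lam (\<lambda>y. indicator {c..<c+1/2} y * ?h y)" for c :: real
    by (intro bounded_borel_integrable bounded_borel_mult h bounded_borelI[of _ 1])
      (auto simp: indicator_def)
  have "(\<integral>y. ?h y \<partial>lam)
      = (\<integral>y. indicator {0..<0+1/2} y * ?h y + indicator {1/2..<1/2+1/2} y * ?h y \<partial>lam)"
    by (rule Bochner_Integration.integral_cong) (auto simp: indicator_def)
  also have "\<dots> = (\<integral>y. indicator {0..<0+1/2} y * ?h y \<partial>lam) + (\<integral>y. indicator {1/2..<1/2+1/2} y * ?h y \<partial>lam)"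
    by (intro Bochner_Integration.integral_add int_ind)
  also have "\<dots> = (1/2) * (\<integral>z. F (0 + z/2) * G z \<partial>lam) + (1/2) * (\<integral>z. F (1/2 + z/2) * G z \<partial>lam)"
    using half[of 0] half[of "1/2"] by simp
  also have "\<dots> = (\<integral>z. (1/2) * (F (0 + z/2) * G z) + (1/2) * (F (1/2 + z/2) * G z) \<partial>lam)"
    using int_half[of 0] int_half[of "1/2"] by simp
  also have "\<dots> = (\<integral>z. transfer_op F z * G z \<partial>lam)"
    by (rule Bochner_Integration.integral_cong) (auto simp: transfer_op_def field_simps)
  finally show ?thesis .
qed

lemma integral_mult_comp_funpow_tau:
  assumes "bounded_borel F" "bounded_borel G"
  shows "(\<integral>y. F y * G ((tau ^^ d) y) \<partial>lam) = (\<integral>z. (transfer_op ^^ d) F z * G z \<partial>lam)"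
  using assms(1)
proof (induction d arbitrary: F)
  case 0 then show ?case by simp
next
  case (Suc d)
  have "(\<integral>y. F y * G ((tau ^^ Suc d) y) \<partial>lam) = (\<integral>y. F y * (\<lambda>x. G ((tau ^^ d) x)) (tau y) \<partial>lam)"
    by (simp add: funpow_Suc_right del: funpow.simps)
  also have "\<dots> = (\<integral>z. transfer_op F z * G ((tau ^^ d) z) \<partial>lam)"
    by (rule integral_mult_comp_tau[OF Suc.prems bounded_borel_comp_funpow_tau[OF assms(2)]])
  also have "\<dots> = (\<integral>z. (transfer_op ^^ d) (transfer_op F) z * G z \<partial>lam)"
    by (rule Suc.IH[OF bounded_borel_transfer_op[OF Suc.prems]])
  finally show ?case by (simp add: funpow_Suc_right del: funpow.simps)
qed

lemma funpow_transfer_op_const: "(transfer_op ^^ d) (\<lambda>_. c) = (\<lambda>_. c)"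
  by (induction d) (auto simp: transfer_op_def[abs_def])

lemma integral_comp_funpow_tau:
  "bounded_borel G \<Longrightarrow> (\<integral>y. G ((tau ^^ d) y) \<partial>lam) = (\<integral>z. G z \<partial>lam)"
  using integral_mult_comp_funpow_tau[OF bounded_borel_const[of 1], of G d]
  by (simp add: funpow_transfer_op_const)

lemma integral_funpow_transfer_op:
  "bounded_borel F \<Longrightarrow> (\<integral>z. (transfer_op ^^ d) F z \<partial>lam) = (\<integral>z. F z \<partial>lam)"
  using integral_mult_comp_funpow_tau[OF _ bounded_borel_const[of 1], of F d] by simp

lemma funpow_transfer_op_diff:
  "(transfer_op ^^ d) (\<lambda>y. F y - G y) = (\<lambda>z. (transfer_op ^^ d) F z - (transfer_op ^^ d) G z)"
proof (induction d arbitrary: F G)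
  case 0 then show ?case by simp
next
  case (Suc d)
  have "transfer_op (\<lambda>y. F y - G y) = (\<lambda>y. transfer_op F y - transfer_op G y)"
    by (auto simp: transfer_op_def[abs_def] field_simps)
  then show ?case
    using Suc.IH[of "transfer_op F" "transfer_op G"] by (simp add: funpow_Suc_right del: funpow.simps)
qed

lemma funpow_transfer_op_cong:
  assumes "\<And>y. y \<in> {0..<1} \<Longrightarrow> F y = H y" "z \<in> {0..<1}"
  shows "(transfer_op ^^ d) F z = (transfer_op ^^ d) H z"
  using assms
proof (induction d arbitrary: F H z)
  case 0 then show ?case by simp
next
  case (Suc d)
  have "\<And>y. y \<in> {0..<1} \<Longrightarrow> transfer_op F y = transfer_op H y"
    using Suc.prems(1) by (auto simp: transfer_op_def)
  then show ?case
    using Suc.IH[of "transfer_op F" "transfer_op H" z] Suc.prems(2)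
    by (simp add: funpow_Suc_right del: funpow.simps)
qed

text \<open>
  For decreasing \<open>G\<close> with values in \<open>[B, A]\<close>, \<open>transfer_op G\<close> is decreasing with values in
  \<open>[(G (1/2) + B) / 2, (A + G (1/2)) / 2]\<close>, an interval of half the length.
\<close>

lemma funpow_transfer_op_oscillation:
  assumes "\<And>y y'. y \<in> {0..<1} \<Longrightarrow> y' \<in> {0..<1} \<Longrightarrow> y \<le> y' \<Longrightarrow> G y' \<le> G y"
    and "\<And>y. y \<in> {0..<1} \<Longrightarrow> B \<le> G y \<and> G y \<le> A"
    and "z \<in> {0..<1}" "w \<in> {0..<1}"
  shows "(transfer_op ^^ d) G z - (transfer_op ^^ d) G w \<le> (A - B) / 2 ^ d"
  using assms
proof (induction d arbitrary: G A B)
  case 0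
  then have "G z \<le> A" "B \<le> G w" by auto
  then show ?case by simp
next
  case (Suc d)
  let ?P = "transfer_op G"
  let ?A = "(A + G (1/2)) / 2" and ?B = "(G (1/2) + B) / 2"
  have mono: "?P y' \<le> ?P y" if "y \<in> {0..<1}" "y' \<in> {0..<1}" "y \<le> y'" for y y'
    using Suc.prems(1)[of "y/2" "y'/2"] Suc.prems(1)[of "1/2 + y/2" "1/2 + y'/2"] that
    unfolding transfer_op_def by auto
  have bounds: "?B \<le> ?P y \<and> ?P y \<le> ?A" if "y \<in> {0..<1}" for y
    using Suc.prems(2)[of "y/2"] Suc.prems(2)[of "1/2 + y/2"]
      Suc.prems(1)[of "y/2" "1/2"] Suc.prems(1)[of "1/2" "1/2 + y/2"] that
    unfolding transfer_op_def by auto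
  have "(transfer_op ^^ d) ?P z - (transfer_op ^^ d) ?P w \<le> (?A - ?B) / 2 ^ d"
    by (rule Suc.IH[OF mono bounds]) (use Suc.prems in auto)
  also have "(?A - ?B) / 2 ^ d = (A - B) / 2 ^ Suc d" by (simp add: field_simps)
  finally show ?case by (simp add: funpow_Suc_right del: funpow.simps)
qed

section \<open>The truncated digit function\<close>

definition trunc_chi :: "nat \<Rightarrow> real \<Rightarrow> real" where
  "trunc_chi K y = (if chi y \<le> real K then chi y else 0)"

definition trunc_mean :: "nat \<Rightarrow> real" where
  "trunc_mean K = harm (Suc K) - 1"

lemma chi_nonneg: "y \<in> {0..<1} \<Longrightarrow> 0 \<le> chi y"
  unfolding chi_def by auto

lemma chi_le_of_nat_iff: "chi y \<le> real K \<longleftrightarrow> 1 / y < real K + 1"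
proof -
  have "chi y \<le> real K \<longleftrightarrow> \<lfloor>1 / y\<rfloor> \<le> int K" unfolding chi_def by linarith
  also have "\<dots> \<longleftrightarrow> 1 / y < real K + 1" by (simp add: floor_le_iff)
  finally show ?thesis .
qed

lemma chi_antimono: "y \<in> {0..<1} \<Longrightarrow> 0 < y \<Longrightarrow> y \<le> y' \<Longrightarrow> chi y' \<le> chi y"
  unfolding chi_def by (simp add: floor_mono frac_le)

lemma borel_measurable_trunc_chi [measurable]: "trunc_chi K \<in> borel_measurable borel"
  unfolding trunc_chi_def[abs_def] by measurable

lemma trunc_chi_bounds: "y \<in> {0..<1} \<Longrightarrow> 0 \<le> trunc_chi K y \<and> trunc_chi K y \<le> real K"
  using chi_nonneg[of y] unfolding trunc_chi_def by auto

lemma trunc_chi_mono: "y \<in> {0..<1} \<Longrightarrow> K \<le> K' \<Longrightarrow> trunc_chi K y \<le> trunc_chi K' y"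
  using chi_nonneg[of y] unfolding trunc_chi_def by auto

lemma bounded_borel_trunc_chi: "bounded_borel (trunc_chi K)"
  by (rule bounded_borelI[of _ "real K"]) (use trunc_chi_bounds in auto)

lemma chi_level_set:
  assumes "k \<ge> 1"
  shows "{y\<in>{0..<1}. chi y = real k} = {1/(real k+1)<..1/real k} \<inter> {..<1}"
proof (intro set_eqI iffI)
  fix y assume y: "y \<in> {y\<in>{0..<1}. chi y = real k}"
  then have f: "\<lfloor>1/y\<rfloor> = int k" unfolding chi_def by simp
  then have "y > 0" using y assms by (cases "y = 0") auto
  moreover have "real k \<le> 1/y" "1/y < real k + 1" using f by linarith+
  ultimately show "y \<in> {1/(real k+1)<..1/real k} \<inter> {..<1}"
    using y assms by (auto simp: field_simps)
next
  fix y assume y: "y \<in> {1/(real k+1)<..1/real k} \<inter> {..<1}"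
  have "0 < 1/(real k+1)" "1/(real k+1) < y" using y by auto
  then have "y > 0" by linarith
  then have "real k \<le> 1/y" "1/y < real k + 1" using y assms by (auto simp: field_simps)
  then have "\<lfloor>1/y\<rfloor> = int k" by (simp add: floor_eq_iff)
  then show "y \<in> {y\<in>{0..<1}. chi y = real k}" using \<open>y > 0\<close> y unfolding chi_def by auto
qed

lemma measure_chi_eq:
  assumes "k \<ge> 1"
  shows "measure lam {y\<in>space lam. chi y = real k} = 1/real k - 1/(real k + 1)"
proof -
  let ?S = "{1/(real k+1)<..1/real k} \<inter> {..<1}"
  have "?S \<subseteq> {0..<1}"
    using assms by (auto simp: field_simps)
  have "measure lam {y\<in>space lam. chi y = real k} = measure lam ?S"
    using chi_level_set[OF assms] by simp
  also have "\<dots> = measure lborel ?S"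
    unfolding lam_def by (rule measure_restrict_space) (use \<open>?S \<subseteq> {0..<1}\<close> in auto)
  also have "\<dots> = 1/real k - 1/(real k + 1)"
  proof (cases "k = 1")
    case True
    then have "?S = {1/2<..<1}" by auto
    then show ?thesis using True by simp
  next
    case False
    then have "1/real k < 1" using assms by simp
    moreover have "1/(real k+1) \<le> 1/real k" using assms by (simp add: frac_le)
    ultimately show ?thesis by (simp add: Int_absorb2 subset_eq)
  qed
  finally show ?thesis .
qed

lemma integral_chi_eq_power:
  assumes "k \<ge> 1"
  shows "(\<integral>y. (if chi y = real k then real k ^ p else 0) \<partial>lam) = real k ^ p / (real k * (real k + 1))"
proof -
  have "(\<integral>y. (if chi y = real k then real k ^ p else 0) \<partial>lam)
      = (\<integral>y. real k ^ p * indicator {y\<in>space lam. chi y = real k} y \<partial>lam)"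
    by (rule Bochner_Integration.integral_cong) (auto simp: indicator_def)
  also have "\<dots> = real k ^ p * measure lam {y\<in>space lam. chi y = real k}"
    by (simp, rule disjI2, rule arg_cong[where f="measure lam"]) auto
  also have "\<dots> = real k ^ p * (1/real k - 1/(real k + 1))"
    using measure_chi_eq[OF assms] by simp
  also have "\<dots> = real k ^ p / (real k * (real k + 1))"
    using assms by (simp add: field_simps)
  finally show ?thesis .
qed

lemma trunc_chi_Suc_power:
  assumes "p \<ge> 1"
  shows "trunc_chi (Suc K) y ^ p
    = trunc_chi K y ^ p + (if chi y = real (Suc K) then real (Suc K) ^ p else 0)"
proof -
  have "chi y \<le> real (Suc K) \<longleftrightarrow> chi y \<le> real K \<or> chi y = real (Suc K)"
    unfolding chi_def by (smt (verit, ccfv_threshold) floor_of_int le_floor_iff of_int_of_nat_eq of_nat_Suc)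
  then show ?thesis using assms unfolding trunc_chi_def by (auto simp: power_0_left)
qed

lemma trunc_chi_0: "y \<in> {0..<1} \<Longrightarrow> trunc_chi 0 y = 0"
  using chi_nonneg[of y] unfolding trunc_chi_def by auto

lemma integral_trunc_chi_0_power: "p \<ge> 1 \<Longrightarrow> (\<integral>y. trunc_chi 0 y ^ p \<partial>lam) = 0"
  by (subst Bochner_Integration.integral_cong[OF refl, of _ _ "\<lambda>_. 0"]) (auto simp: trunc_chi_0 power_0_left)

lemma integral_trunc_chi_Suc_power:
  assumes "p \<ge> 1"
  shows "(\<integral>y. trunc_chi (Suc K) y ^ p \<partial>lam)
    = (\<integral>y. trunc_chi K y ^ p \<partial>lam) + real (Suc K) ^ p / (real (Suc K) * (real K + 2))"
proof -
  have "bounded_borel (\<lambda>y. trunc_chi K y ^ p)"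
    by (induction p) (auto intro: bounded_borel_const bounded_borel_mult bounded_borel_trunc_chi)
  moreover have "bounded_borel (\<lambda>y. if chi y = real (Suc K) then real (Suc K) ^ p else 0)"
    by (rule bounded_borelI[of _ "real (Suc K) ^ p"]) auto
  ultimately show ?thesis
    using integral_chi_eq_power[of "Suc K" p]
    by (simp add: trunc_chi_Suc_power[OF assms] bounded_borel_integrable add_ac)
qed

lemma integral_trunc_chi: "(\<integral>y. trunc_chi K y \<partial>lam) = trunc_mean K"
proof (induction K)
  case 0
  then show ?case
    using integral_trunc_chi_0_power[of 1] by (simp add: trunc_mean_def harm_def)
next
  case (Suc K)
  then show ?case
    using integral_trunc_chi_Suc_power[of 1 K]
    by (simp add: trunc_mean_def harm_Suc inverse_eq_divide add_ac)
qed

lemma integral_trunc_chi_square_le: "(\<integral>y. trunc_chi K y ^ 2 \<partial>lam) \<le> real K"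
proof (induction K)
  case 0
  then show ?case
    using integral_trunc_chi_0_power[of 2] by simp
next
  case (Suc K)
  have "real (Suc K) ^ 2 / (real (Suc K) * (real K + 2)) \<le> 1"
    by (simp add: power2_eq_square)
  then show ?case
    using Suc.IH integral_trunc_chi_Suc_power[of 2 K] by linarith
qed

lemma trunc_mean_Suc: "trunc_mean (Suc K) = trunc_mean K + 1 / (real K + 2)"
  by (simp add: trunc_mean_def harm_Suc inverse_eq_divide add_ac)

lemma trunc_mean_nonneg: "0 \<le> trunc_mean K"
  using harm_mono[of 1 "Suc K", where 'a=real] by (simp add: trunc_mean_def harm_def)

lemma trunc_mean_mono: "K \<le> K' \<Longrightarrow> trunc_mean K \<le> trunc_mean K'"
  unfolding trunc_mean_def by (simp add: harm_mono)

lemma trunc_mean_ge_ln: "ln (real K + 2) - 1 \<le> trunc_mean K"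
  using ln_le_harm[of "Suc K"] by (simp add: trunc_mean_def add_ac)

lemma trunc_mean_diff_le:
  "K \<le> K' \<Longrightarrow> trunc_mean K' - trunc_mean K \<le> (real K' - real K) / (real K + 2)"
proof (induction K' rule: dec_induct)
  case base then show ?case by simp
next
  case (step K')
  have "1 / (real K' + 2) \<le> 1 / (real K + 2)" using step(1) by (simp add: frac_le)
  then have "trunc_mean (Suc K') - trunc_mean K \<le> (real K' - real K) / (real K + 2) + 1 / (real K + 2)"
    using step(3) by (simp add: trunc_mean_Suc)
  also have "\<dots> = (real (Suc K') - real K) / (real K + 2)" by (simp add: field_simps)
  finally show ?case .
qed

text \<open>At the junk point \<open>y = 0\<close>, where \<open>\<chi> 0 = 0\<close>, \<open>chi_capped K\<close> takes the value \<open>K\<close>, which keeps it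
  decreasing on \<open>[0,1)\<close>.\<close>

definition chi_capped :: "nat \<Rightarrow> real \<Rightarrow> real" where
  "chi_capped K y = (if y \<le> 0 then real K else min (chi y) (real K))"

definition chi_excess :: "nat \<Rightarrow> real \<Rightarrow> real" where
  "chi_excess K y = (if y \<le> 1/(real K+1) then real K else 0)"

lemma trunc_chi_eq_capped_minus_excess:
  assumes "y \<in> {0..<1}"
  shows "trunc_chi K y = chi_capped K y - chi_excess K y"
proof (cases "y = 0")
  case True then show ?thesis by (simp add: trunc_chi_def chi_capped_def chi_excess_def chi_def)
next
  case False
  then have y0: "y > 0" using assms by auto
  have "y \<le> 1/(real K+1) \<longleftrightarrow> \<not> chi y \<le> real K"
    using y0 by (simp add: chi_le_of_nat_iff field_simps not_less)
  then show ?thesis using y0 by (auto simp: trunc_chi_def chi_capped_def chi_excess_def)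
qed

lemma chi_capped_antimono: "y \<in> {0..<1} \<Longrightarrow> y' \<in> {0..<1} \<Longrightarrow> y \<le> y' \<Longrightarrow> chi_capped K y' \<le> chi_capped K y"
  using chi_antimono[of y y'] by (auto simp: chi_capped_def)

lemma chi_capped_bounds: "y \<in> {0..<1} \<Longrightarrow> 0 \<le> chi_capped K y \<and> chi_capped K y \<le> real K"
  using chi_nonneg[of y] by (auto simp: chi_capped_def)

lemma chi_excess_antimono: "y \<le> y' \<Longrightarrow> chi_excess K y' \<le> chi_excess K y"
  by (auto simp: chi_excess_def)

lemma chi_excess_bounds: "0 \<le> chi_excess K y \<and> chi_excess K y \<le> real K"
  by (auto simp: chi_excess_def)

lemma funpow_transfer_op_trunc_chi_oscillation:
  assumes "z \<in> {0..<1}" "w \<in> {0..<1}"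
  shows "(transfer_op ^^ d) (trunc_chi K) z - (transfer_op ^^ d) (trunc_chi K) w \<le> 2 * real K / 2 ^ d"
proof -
  have split: "(transfer_op ^^ d) (trunc_chi K) x
      = (transfer_op ^^ d) (chi_capped K) x - (transfer_op ^^ d) (chi_excess K) x"
    if "x \<in> {0..<1}" for x
    using funpow_transfer_op_cong[OF trunc_chi_eq_capped_minus_excess that]
    by (simp add: funpow_transfer_op_diff)
  have "(transfer_op ^^ d) (chi_capped K) z - (transfer_op ^^ d) (chi_capped K) w \<le> (real K - 0) / 2 ^ d"
    by (rule funpow_transfer_op_oscillation[OF chi_capped_antimono chi_capped_bounds assms])
  moreover have "(transfer_op ^^ d) (chi_excess K) w - (transfer_op ^^ d) (chi_excess K) z \<le> (real K - 0) / 2 ^ d"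
    by (rule funpow_transfer_op_oscillation[OF chi_excess_antimono chi_excess_bounds assms(2,1)])
  ultimately show ?thesis using split[OF assms(1)] split[OF assms(2)] by simp
qed

lemma funpow_transfer_op_trunc_chi_le:
  assumes "z \<in> {0..<1}"
  shows "(transfer_op ^^ d) (trunc_chi K) z \<le> trunc_mean K + 2 * real K / 2 ^ d"
proof -
  have int: "integrable lam ((transfer_op ^^ d) (trunc_chi K))"
    by (intro bounded_borel_integrable bounded_borel_funpow_transfer_op bounded_borel_trunc_chi)
  have "(transfer_op ^^ d) (trunc_chi K) z \<le> (transfer_op ^^ d) (trunc_chi K) w + 2 * real K / 2 ^ d"
    if "w \<in> space lam" for w
    using funpow_transfer_op_trunc_chi_oscillation[OF assms, of w d K] that by simp
  then have "(\<integral>w. (transfer_op ^^ d) (trunc_chi K) z \<partial>lam)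
      \<le> (\<integral>w. (transfer_op ^^ d) (trunc_chi K) w + 2 * real K / 2 ^ d \<partial>lam)"
    using int by (intro integral_mono) auto
  also have "\<dots> = trunc_mean K + 2 * real K / 2 ^ d"
    using int by (simp add: integral_funpow_transfer_op[OF bounded_borel_trunc_chi] integral_trunc_chi)
  finally show ?thesis by simp
qed

lemma integral_trunc_chi_correlation_le_decay:
  "(\<integral>y. trunc_chi K y * trunc_chi K ((tau ^^ d) y) \<partial>lam)
    \<le> trunc_mean K * (trunc_mean K + 2 * real K / 2 ^ d)"
proof -
  have "(\<integral>y. trunc_chi K y * trunc_chi K ((tau ^^ d) y) \<partial>lam)
      = (\<integral>z. (transfer_op ^^ d) (trunc_chi K) z * trunc_chi K z \<partial>lam)"
    by (rule integral_mult_comp_funpow_tau[OF bounded_borel_trunc_chi bounded_borel_trunc_chi])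
  also have "\<dots> \<le> (\<integral>z. (trunc_mean K + 2 * real K / 2 ^ d) * trunc_chi K z \<partial>lam)"
    using funpow_transfer_op_trunc_chi_le trunc_chi_bounds
    by (intro integral_mono bounded_borel_integrable bounded_borel_mult bounded_borel_const
        bounded_borel_funpow_transfer_op bounded_borel_trunc_chi) (auto intro!: mult_right_mono)
  also have "\<dots> = trunc_mean K * (trunc_mean K + 2 * real K / 2 ^ d)"
    using integral_trunc_chi by (simp add: mult.commute)
  finally show ?thesis .
qed

lemma integral_trunc_chi_correlation_le:
  "(\<integral>y. trunc_chi K y * trunc_chi K ((tau ^^ d) y) \<partial>lam) \<le> real K"
proof -
  let ?f = "trunc_chi K" and ?g = "\<lambda>y. trunc_chi K ((tau ^^ d) y)"
  have bf: "bounded_borel ?f" and bg: "bounded_borel ?g"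
    by (intro bounded_borel_comp_funpow_tau bounded_borel_trunc_chi)+
  have "(\<integral>y. ?f y * ?g y \<partial>lam) \<le> (\<integral>y. (1/2) * (?f y * ?f y + ?g y * ?g y) \<partial>lam)"
    using sum_squares_bound[of "?f y" "?g y" for y]
    by (intro integral_mono bounded_borel_integrable bounded_borel_mult bounded_borel_add
        bounded_borel_const bf bg) (auto simp: field_simps power2_eq_square)
  also have "\<dots> = ((\<integral>y. ?f y ^ 2 \<partial>lam) + (\<integral>y. ?g y ^ 2 \<partial>lam)) / 2"
    using bounded_borel_integrable[OF bounded_borel_mult[OF bf bf]]
      bounded_borel_integrable[OF bounded_borel_mult[OF bg bg]]
    by (simp add: power2_eq_square)
  also have "(\<integral>y. ?g y ^ 2 \<partial>lam) = (\<integral>y. ?f y ^ 2 \<partial>lam)"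
    using integral_comp_funpow_tau[OF bounded_borel_mult[OF bf bf], of d] by (simp add: power2_eq_square)
  finally show ?thesis using integral_trunc_chi_square_le[of K] by simp
qed

section \<open>Variance of the truncated digit sums\<close>

definition trunc_sum :: "nat \<Rightarrow> nat \<Rightarrow> real \<Rightarrow> real" where
  "trunc_sum K n x = (\<Sum>i<n. trunc_chi K ((tau ^^ i) x))"

lemma trunc_digit_eq_trunc_chi:
  assumes "r \<ge> 0"
  shows "trunc_digit r i x = trunc_chi (nat \<lfloor>r\<rfloor>) ((tau ^^ (i - 1)) x)"
proof -
  have "chi y \<le> r \<longleftrightarrow> chi y \<le> real (nat \<lfloor>r\<rfloor>)" for y
    using assms unfolding chi_def by (simp add: le_floor_iff)
  then show ?thesis unfolding trunc_digit_def digit_def trunc_chi_def by simp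
qed

lemma T_eq_trunc_sum: "r \<ge> 0 \<Longrightarrow> T n r x = trunc_sum (nat \<lfloor>r\<rfloor>) n x"
  unfolding T_def trunc_sum_def by (simp add: trunc_digit_eq_trunc_chi sum.atLeast1_atMost_eq)

lemma bounded_borel_trunc_sum: "bounded_borel (trunc_sum K n)"
  unfolding trunc_sum_def[abs_def]
  by (intro bounded_borel_sum bounded_borel_comp_funpow_tau bounded_borel_trunc_chi)

lemma trunc_sum_nonneg: "x \<in> {0..<1} \<Longrightarrow> 0 \<le> trunc_sum K n x"
  unfolding trunc_sum_def using trunc_chi_bounds[OF funpow_tau_in_unit] by (intro sum_nonneg) auto

lemma trunc_sum_mono:
  assumes x: "x \<in> {0..<1}" and "K \<le> K'" "n \<le> n'"
  shows "trunc_sum K n x \<le> trunc_sum K' n' x"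
proof -
  have "trunc_sum K n x \<le> trunc_sum K' n x"
    unfolding trunc_sum_def by (intro sum_mono trunc_chi_mono funpow_tau_in_unit x assms(2))
  also have "\<dots> \<le> trunc_sum K' n' x"
    unfolding trunc_sum_def using trunc_chi_bounds[OF funpow_tau_in_unit[OF x]] assms(3)
    by (intro sum_mono2) auto
  finally show ?thesis .
qed

lemma integral_trunc_sum: "(\<integral>x. trunc_sum K n x \<partial>lam) = real n * trunc_mean K"
proof -
  have "(\<integral>x. trunc_sum K n x \<partial>lam) = (\<Sum>i<n. (\<integral>x. trunc_chi K ((tau ^^ i) x) \<partial>lam))"
    unfolding trunc_sum_def
    by (intro Bochner_Integration.integral_sum bounded_borel_integrable bounded_borel_comp_funpow_tau
        bounded_borel_trunc_chi)
  also have "\<dots> = real n * trunc_mean K"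
    by (simp add: integral_comp_funpow_tau[OF bounded_borel_trunc_chi] integral_trunc_chi)
  finally show ?thesis .
qed

definition trunc_cov :: "nat \<Rightarrow> nat \<Rightarrow> real" where
  "trunc_cov K d = (\<integral>y. (trunc_chi K y - trunc_mean K) * (trunc_chi K ((tau ^^ d) y) - trunc_mean K) \<partial>lam)"

lemma trunc_cov_eq:
  "trunc_cov K d = (\<integral>y. trunc_chi K y * trunc_chi K ((tau ^^ d) y) \<partial>lam) - trunc_mean K ^ 2"
proof -
  let ?f = "trunc_chi K" and ?g = "\<lambda>y. trunc_chi K ((tau ^^ d) y)" and ?m = "trunc_mean K"
  have bf: "bounded_borel ?f" and bg: "bounded_borel ?g"
    by (intro bounded_borel_comp_funpow_tau bounded_borel_trunc_chi)+
  have "trunc_cov K d = (\<integral>y. ?f y * ?g y - ?m * ?f y - ?m * ?g y + ?m ^ 2 \<partial>lam)"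
    unfolding trunc_cov_def
    by (rule Bochner_Integration.integral_cong) (auto simp: algebra_simps power2_eq_square)
  also have "\<dots> = (\<integral>y. ?f y * ?g y \<partial>lam) - ?m * (\<integral>y. ?f y \<partial>lam) - ?m * (\<integral>y. ?g y \<partial>lam) + ?m ^ 2"
    using bf bg bounded_borel_mult[OF bf bg] by (simp add: bounded_borel_integrable)
  also have "\<dots> = (\<integral>y. ?f y * ?g y \<partial>lam) - ?m ^ 2"
    by (simp add: integral_comp_funpow_tau[OF bounded_borel_trunc_chi] integral_trunc_chi power2_eq_square)
  finally show ?thesis .
qed

lemma trunc_cov_le: "trunc_cov K d \<le> min (real K) (2 * real K * trunc_mean K / 2 ^ d)"
proof -
  have "trunc_cov K d \<le> real K"
    using trunc_cov_eq[of K d] integral_trunc_chi_correlation_le[of K d] zero_le_power2[of "trunc_mean K"]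
    by linarith
  moreover have "trunc_cov K d \<le> 2 * real K * trunc_mean K / 2 ^ d"
    using trunc_cov_eq[of K d] integral_trunc_chi_correlation_le_decay[of K d]
    by (simp add: algebra_simps power2_eq_square)
  ultimately show ?thesis by simp
qed

lemma integral_centered_trunc_chi_product:
  "(\<integral>x. (trunc_chi K ((tau ^^ i) x) - trunc_mean K) * (trunc_chi K ((tau ^^ j) x) - trunc_mean K) \<partial>lam)
    = trunc_cov K (max i j - min i j)"
proof -
  have ordered: "(\<integral>x. (trunc_chi K ((tau ^^ i) x) - trunc_mean K) * (trunc_chi K ((tau ^^ j) x) - trunc_mean K) \<partial>lam)
      = trunc_cov K (j - i)" if "i \<le> j" for i j
  proof -
    let ?H = "\<lambda>y. (trunc_chi K y - trunc_mean K) * (trunc_chi K ((tau ^^ (j - i)) y) - trunc_mean K)"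
    have H: "bounded_borel ?H"
      by (intro bounded_borel_mult bounded_borel_diff bounded_borel_trunc_chi bounded_borel_const
          bounded_borel_comp_funpow_tau)
    have "(tau ^^ j) x = (tau ^^ (j - i)) ((tau ^^ i) x)" for x
      using that by (metis funpow_add le_add_diff_inverse2 o_apply)
    then have "(\<integral>x. (trunc_chi K ((tau ^^ i) x) - trunc_mean K) * (trunc_chi K ((tau ^^ j) x) - trunc_mean K) \<partial>lam)
        = (\<integral>x. ?H ((tau ^^ i) x) \<partial>lam)"
      by simp
    also have "\<dots> = trunc_cov K (j - i)"
      unfolding trunc_cov_def by (rule integral_comp_funpow_tau[OF H])
    finally show ?thesis .
  qed
  show ?thesis
    using ordered[of i j] ordered[of j i] by (cases "i \<le> j") (simp_all add: mult.commute)
qed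

lemma variance_trunc_sum_eq:
  "(\<integral>x. (trunc_sum K n x - real n * trunc_mean K) ^ 2 \<partial>lam)
    = (\<Sum>i<n. \<Sum>j<n. trunc_cov K (max i j - min i j))"
proof -
  let ?X = "\<lambda>i x. trunc_chi K ((tau ^^ i) x) - trunc_mean K"
  have XX: "bounded_borel (\<lambda>x. ?X i x * ?X j x)" for i j
    by (intro bounded_borel_mult bounded_borel_diff bounded_borel_const bounded_borel_trunc_chi
        bounded_borel_comp_funpow_tau)
  have "trunc_sum K n x - real n * trunc_mean K = (\<Sum>i<n. ?X i x)" for x
    unfolding trunc_sum_def by (simp add: sum_subtractf)
  then have "(\<integral>x. (trunc_sum K n x - real n * trunc_mean K) ^ 2 \<partial>lam)
      = (\<integral>x. (\<Sum>i<n. \<Sum>j<n. ?X i x * ?X j x) \<partial>lam)"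
    by (simp add: power2_eq_square sum_product)
  also have "\<dots> = (\<Sum>i<n. \<integral>x. (\<Sum>j<n. ?X i x * ?X j x) \<partial>lam)"
    by (rule Bochner_Integration.integral_sum, rule bounded_borel_integrable, rule bounded_borel_sum, rule XX)
  also have "\<dots> = (\<Sum>i<n. \<Sum>j<n. \<integral>x. ?X i x * ?X j x \<partial>lam)"
    by (intro sum.cong refl Bochner_Integration.integral_sum) (rule bounded_borel_integrable[OF XX])
  finally show ?thesis by (simp add: integral_centered_trunc_chi_product)
qed

lemma sum_abs_index_diff_le:
  fixes b :: "nat \<Rightarrow> real"
  assumes "\<And>d. 0 \<le> b d" and "i < n"
  shows "(\<Sum>j<n. b (max i j - min i j)) \<le> 2 * (\<Sum>d<n. b d)"
proof -
  have "(\<Sum>j<n. b (max i j - min i j))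
      \<le> (\<Sum>j<n. (if j \<le> i then b (i - j) else 0) + (if i \<le> j then b (j - i) else 0))"
    by (intro sum_mono) (auto simp: assms)
  also have "\<dots> = (\<Sum>j\<in>{j. j<n \<and> j \<le> i}. b (i - j)) + (\<Sum>j\<in>{j. j<n \<and> i \<le> j}. b (j - i))"
    by (simp add: sum.distrib sum.inter_filter[symmetric] Collect_conj_eq[symmetric] lessThan_def)
  also have "(\<Sum>j\<in>{j. j<n \<and> j \<le> i}. b (i - j)) = (\<Sum>d\<in>(\<lambda>j. i - j) ` {j. j<n \<and> j \<le> i}. b d)"
    by (rule sum.reindex[symmetric, unfolded comp_def]) (auto simp: inj_on_def)
  also have "\<dots> \<le> (\<Sum>d<n. b d)"
    by (rule sum_mono2) (use assms in auto)
  also have "(\<Sum>j\<in>{j. j<n \<and> i \<le> j}. b (j - i)) = (\<Sum>d\<in>(\<lambda>j. j - i) ` {j. j<n \<and> i \<le> j}. b d)"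
    by (rule sum.reindex[symmetric, unfolded comp_def]) (auto simp: inj_on_def)
  also have "\<dots> \<le> (\<Sum>d<n. b d)"
    by (rule sum_mono2) (use assms in auto)
  finally show ?thesis by simp
qed

lemma sum_half_powers_from_le: "(\<Sum>d\<in>{D..<M}. (1/2::real) ^ d) \<le> 2 * (1/2) ^ D"
proof (cases "D \<le> M")
  case True
  then obtain k where M: "M = k + D" by (metis add.commute le_Suc_ex)
  have "(\<Sum>d\<in>{D..<M}. (1/2::real) ^ d) = (\<Sum>e\<in>{0..<k}. (1/2) ^ (e + D))"
    unfolding M using sum.atLeastLessThan_shift_bounds[of "\<lambda>d. (1/2::real) ^ d" 0 D k] by (simp add: comp_def add.commute)
  also have "\<dots> = (1/2) ^ D * (\<Sum>e<k. (1/2) ^ e)"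
    by (simp add: power_add sum_distrib_left atLeast0LessThan mult.commute)
  also have "\<dots> \<le> (1/2) ^ D * 2"
    using geometric_sum_less[of "1/2::real" "{..<k}"] by (intro mult_left_mono) auto
  finally show ?thesis by simp
qed simp

lemma sum_min_geometric_le:
  fixes a c :: real
  assumes "0 \<le> a" "0 \<le> c"
  shows "(\<Sum>d<n. min a (c / 2 ^ d)) \<le> a * real D + 2 * c / 2 ^ D"
proof -
  have "(\<Sum>d<n. min a (c / 2 ^ d)) \<le> (\<Sum>d<max n D. min a (c / 2 ^ d))"
    using assms by (intro sum_mono2) auto
  also have "\<dots> = (\<Sum>d<D. min a (c / 2 ^ d)) + (\<Sum>d\<in>{D..<max n D}. min a (c / 2 ^ d))"
    by (metis max.cobounded2 sum.atLeastLessThan_concat lessThan_atLeast0 le0)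
  also have "\<dots> \<le> (\<Sum>d<D. a) + c * (\<Sum>d\<in>{D..<max n D}. (1/2) ^ d)"
    by (intro add_mono sum_mono) (auto simp: sum_distrib_left power_one_over intro!: sum_mono)
  also have "\<dots> \<le> a * real D + c * (2 * (1/2) ^ D)"
    using assms(2) sum_half_powers_from_le by (simp add: mult_left_mono)
  finally show ?thesis by (simp add: power_one_over mult.commute)
qed

lemma variance_trunc_sum_le:
  "(\<integral>x. (trunc_sum K n x - real n * trunc_mean K) ^ 2 \<partial>lam)
    \<le> 2 * real n * (real K * real D + 4 * real K * trunc_mean K / 2 ^ D)"
proof -
  let ?b = "\<lambda>d. min (real K) (2 * real K * trunc_mean K / 2 ^ d)"
  have "(\<integral>x. (trunc_sum K n x - real n * trunc_mean K) ^ 2 \<partial>lam) \<le> (\<Sum>i<n. \<Sum>j<n. ?b (max i j - min i j))"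
    unfolding variance_trunc_sum_eq by (intro sum_mono trunc_cov_le)
  also have "\<dots> \<le> (\<Sum>i<n. 2 * (\<Sum>d<n. ?b d))"
    using trunc_mean_nonneg by (intro sum_mono sum_abs_index_diff_le) auto
  also have "\<dots> = 2 * real n * (\<Sum>d<n. ?b d)" by simp
  also have "\<dots> \<le> 2 * real n * (real K * real D + 2 * (2 * real K * trunc_mean K) / 2 ^ D)"
    using trunc_mean_nonneg by (intro mult_left_mono sum_min_geometric_le) auto
  finally show ?thesis by (simp add: mult.assoc)
qed

lemma prob_trunc_sum_deviation_le:
  assumes "a > 0"
  shows "measure lam {x\<in>space lam. a \<le> \<bar>trunc_sum K n x - real n * trunc_mean K\<bar>}
    \<le> (\<integral>x. (trunc_sum K n x - real n * trunc_mean K) ^ 2 \<partial>lam) / a ^ 2"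
proof -
  have meas: "trunc_sum K n \<in> borel_measurable lam"
    using bounded_borel_trunc_sum by (auto simp: bounded_borel_def intro: measurable_lam_borel)
  have int: "integrable lam (\<lambda>x. trunc_sum K n x ^ 2)"
    using bounded_borel_integrable[OF bounded_borel_mult[OF bounded_borel_trunc_sum bounded_borel_trunc_sum]]
    by (simp add: power2_eq_square)
  show ?thesis using L.Chebyshev_inequality[OF meas int assms] by (simp add: integral_trunc_sum)
qed

lemma variance_trunc_sum_log_le:
  assumes "1 \<le> trunc_mean K"
  shows "(\<integral>x. (trunc_sum K n x - real n * trunc_mean K) ^ 2 \<partial>lam)
    \<le> 2 * real n * real K * (log 2 (trunc_mean K) + 5)"
proof -
  define m where "m = trunc_mean K"
  define D where "D = nat \<lceil>log 2 m\<rceil>"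
  have lg: "0 \<le> log 2 m" using assms unfolding m_def by simp
  then have D: "real D \<le> log 2 m + 1" unfolding D_def by linarith
  have "m = 2 powr (log 2 m)" using assms unfolding m_def by simp
  also have "\<dots> \<le> 2 powr (real D)" unfolding D_def using lg by (intro powr_mono) linarith+
  finally have "m / 2 ^ D \<le> 1" by (simp add: powr_realpow)
  then have "4 * real K * (m / 2 ^ D) \<le> 4 * real K * 1" by (intro mult_left_mono) auto
  moreover have "real K * real D \<le> real K * (log 2 m + 1)" using D by (intro mult_left_mono) auto
  ultimately have "real K * real D + 4 * real K * m / 2 ^ D \<le> real K * (log 2 m + 1) + real K * 4"
    by simp
  then have "2 * real n * (real K * real D + 4 * real K * m / 2 ^ D) \<le> 2 * real n * (real K * (log 2 m + 5))"
    by (intro mult_left_mono) (auto simp: algebra_simps)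
  then show ?thesis
    using variance_trunc_sum_le[of K n D] unfolding m_def by (simp add: mult.assoc)
qed

lemma ln_ge_2: "n \<ge> 9 \<Longrightarrow> 2 \<le> ln (real n)"
proof -
  assume "n \<ge> 9"
  have "2 \<le> 3 * ln (2::real)" using ln2_ge_two_thirds by simp
  also have "\<dots> = ln (2 ^ 3)" using ln_realpow[of 2 3] by simp
  also have "\<dots> \<le> ln (real n)" using \<open>n \<ge> 9\<close> by simp
  finally show ?thesis .
qed

lemma relative_variance_arith:
  fixes L m :: real
  assumes L: "L \<ge> 2" and m: "m \<ge> L/2" "m \<ge> 1"
  shows "2 * L powr (3/4) * (log 2 m + 5) / m^2 \<le> 300 * L powr (-19/16)"
proof -
  have "ln m \<le> m powr (1/16) / (1/16)" by (rule ln_powr_bound) (use m in auto)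
  then have "ln m \<le> 16 * m powr (1/16)" by simp
  moreover have "log 2 m \<le> 2 * ln m"
  proof -
    have "ln m * 1 \<le> ln m * (2 * ln 2)" using m ln2_ge_two_thirds by (intro mult_left_mono) auto
    then show ?thesis by (simp add: log_def pos_divide_le_eq mult_ac)
  qed
  moreover have "1 \<le> m powr (1/16)" using m by (simp add: ge_one_powr_ge_zero)
  ultimately have a: "log 2 m + 5 \<le> 37 * m powr (1/16)" by linarith
  have "m^2 = m powr 2" using m by (simp add: powr_numeral)
  then have "m powr (1/16) / m^2 = m powr (1/16) / m powr 2" by simp
  also have "\<dots> = m powr (1/16 - 2)" by (rule powr_diff[symmetric])
  also have "\<dots> = m powr (-31/16)" by simp
  also have "\<dots> \<le> (L/2) powr (-31/16)" by (rule powr_mono2') (use L m in auto)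
  also have "\<dots> = L powr (-31/16) * 2 powr (31/16)" by (simp add: powr_divide powr_minus_divide)
  also have "\<dots> \<le> L powr (-31/16) * 4"
    using powr_mono[of "31/16" 2 "2::real"] by (intro mult_left_mono) auto
  finally have b: "m powr (1/16) / m^2 \<le> 4 * L powr (-31/16)" by simp
  have "2 * L powr (3/4) * (log 2 m + 5) / m^2 = 2 * L powr (3/4) * ((log 2 m + 5) / m^2)" by simp
  also have "\<dots> \<le> 2 * L powr (3/4) * (37 * (m powr (1/16) / m^2))"
    using divide_right_mono[OF a, of "m^2"] by (intro mult_left_mono) auto
  also have "\<dots> \<le> 2 * L powr (3/4) * (37 * (4 * L powr (-31/16)))"
    using b by (intro mult_left_mono) auto
  also have "\<dots> = 296 * (L powr (3/4) * L powr (-31/16))" by simp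
  also have "L powr (3/4) * L powr (-31/16) = L powr (-19/16)"
    using L by (simp add: powr_add[symmetric])
  finally show ?thesis using powr_ge_zero[of L "-19/16"] by linarith
qed

definition trunc_level :: "nat \<Rightarrow> nat" where
  "trunc_level n = nat \<lfloor>t_seq n\<rfloor>"

definition T_mean :: "nat \<Rightarrow> real" where
  "T_mean n = real n * trunc_mean (trunc_level n)"

lemma t_seq_nonneg: "0 \<le> t_seq n"
  unfolding t_seq_def by simp

lemma T_t_seq_eq: "(\<lambda>x. T n (t_seq n) x) = trunc_sum (trunc_level n) n"
  by (simp add: fun_eq_iff T_eq_trunc_sum[OF t_seq_nonneg] trunc_level_def)

lemma integral_T_t_seq: "(\<integral>x. T n (t_seq n) x \<partial>lam) = T_mean n"
  by (simp add: T_t_seq_eq integral_trunc_sum T_mean_def)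

lemma trunc_level_le: "real (trunc_level n) \<le> t_seq n"
  and less_trunc_level_plus_1: "t_seq n < real (trunc_level n) + 1"
  using t_seq_nonneg[of n] unfolding trunc_level_def by linarith+

lemma t_seq_ge: "n \<ge> 9 \<Longrightarrow> real n \<le> t_seq n"
proof -
  assume "n \<ge> 9"
  then have "1 \<le> ln (real n) powr (3/4)" using ln_ge_2[of n] by (intro ge_one_powr_ge_zero) auto
  then show ?thesis unfolding t_seq_def using mult_left_mono[of 1 "ln (real n) powr (3/4)" "real n"] by simp
qed

lemma t_seq_mono: "n \<le> n' \<Longrightarrow> t_seq n \<le> t_seq n'"
proof (cases "n = 0")
  case False
  assume "n \<le> n'"
  then have "ln (real n) powr (3/4) \<le> ln (real n') powr (3/4)" using False by (intro powr_mono2) auto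
  then show ?thesis unfolding t_seq_def using \<open>n \<le> n'\<close> by (intro mult_mono) auto
next
  case True
  then show ?thesis using t_seq_nonneg[of n'] by (simp add: t_seq_def[of 0])
qed

lemma trunc_level_mono: "n \<le> n' \<Longrightarrow> trunc_level n \<le> trunc_level n'"
  unfolding trunc_level_def by (intro nat_mono floor_mono t_seq_mono)

lemma T_mean_mono: "n \<le> n' \<Longrightarrow> T_mean n \<le> T_mean n'"
  unfolding T_mean_def using trunc_mean_nonneg by (intro mult_mono trunc_mean_mono trunc_level_mono) auto

lemma trunc_mean_trunc_level_ge: "n \<ge> 9 \<Longrightarrow> ln (real n) - 1 \<le> trunc_mean (trunc_level n)"
proof -
  assume n: "n \<ge> 9"
  then have "real n \<le> real (trunc_level n) + 2" using t_seq_ge less_trunc_level_plus_1[of n] by force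
  then have "ln (real n) \<le> ln (real (trunc_level n) + 2)" using n by simp
  then show ?thesis using trunc_mean_ge_ln[of "trunc_level n"] by linarith
qed

lemma T_mean_pos: "n \<ge> 9 \<Longrightarrow> 0 < T_mean n"
  using trunc_mean_trunc_level_ge ln_ge_2 unfolding T_mean_def by force

lemma T_t_seq_mono: "x \<in> {0..<1} \<Longrightarrow> n \<le> n' \<Longrightarrow> T n (t_seq n) x \<le> T n' (t_seq n') x"
  by (simp add: T_t_seq_eq[unfolded fun_eq_iff] trunc_sum_mono trunc_level_mono)

lemma T_t_seq_nonneg: "x \<in> {0..<1} \<Longrightarrow> 0 \<le> T n (t_seq n) x"
  by (simp add: T_t_seq_eq[unfolded fun_eq_iff] trunc_sum_nonneg)

lemma borel_measurable_T_t_seq [measurable]: "(\<lambda>x. T n (t_seq n) x) \<in> borel_measurable lam"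
  using bounded_borel_trunc_sum by (simp add: T_t_seq_eq bounded_borel_def measurable_lam_borel)

lemma prob_T_deviation_le:
  assumes n: "n \<ge> 9" and e: "\<epsilon> > 0"
  shows "measure lam {x\<in>space lam. \<epsilon> * T_mean n \<le> \<bar>T n (t_seq n) x - T_mean n\<bar>}
    \<le> 300 / \<epsilon>^2 * ln (real n) powr (-19/16)"
proof -
  define K m L where "K = trunc_level n" and "m = trunc_mean K" and "L = ln (real n)"
  have L: "L \<ge> 2" unfolding L_def by (rule ln_ge_2[OF n])
  then have m: "m \<ge> 1" "m \<ge> L/2"
    using trunc_mean_trunc_level_ge[OF n] unfolding m_def K_def L_def by linarith+
  have pos: "0 < \<epsilon> * (real n * m)" using e n m by simp
  have "(\<integral>x. (trunc_sum K n x - real n * m) ^ 2 \<partial>lam) \<le> 2 * real n * real K * (log 2 m + 5)"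
    using variance_trunc_sum_log_le[of K n] m(1) unfolding m_def by simp
  also have "\<dots> = 2 * real n * (real K * (log 2 m + 5))" by simp
  also have "\<dots> \<le> 2 * real n * (t_seq n * (log 2 m + 5))"
    using trunc_level_le[of n] m(1) unfolding K_def by (intro mult_left_mono mult_right_mono) auto
  finally have var: "(\<integral>x. (trunc_sum K n x - real n * m) ^ 2 \<partial>lam)
      \<le> 2 * real n * (t_seq n * (log 2 m + 5))" .
  have "measure lam {x\<in>space lam. \<epsilon> * T_mean n \<le> \<bar>T n (t_seq n) x - T_mean n\<bar>}
      \<le> (\<integral>x. (trunc_sum K n x - real n * m) ^ 2 \<partial>lam) / (\<epsilon> * (real n * m)) ^ 2"
    using prob_trunc_sum_deviation_le[OF pos, of K n]
    by (simp add: T_t_seq_eq[unfolded fun_eq_iff] T_mean_def K_def m_def)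
  also have "\<dots> \<le> 2 * real n * (t_seq n * (log 2 m + 5)) / (\<epsilon> * (real n * m)) ^ 2"
    using var by (rule divide_right_mono) simp
  also have "\<dots> = ((real n * real n) * (2 * L powr (3/4) * (log 2 m + 5))) / ((real n * real n) * (\<epsilon>^2 * m^2))"
    unfolding t_seq_def L_def by (simp add: power2_eq_square mult_ac)
  also have "\<dots> = (2 * L powr (3/4) * (log 2 m + 5) / m^2) / \<epsilon>^2"
    using n by (subst mult_divide_mult_cancel_left) (simp_all add: mult.commute)
  also have "\<dots> \<le> 300 * L powr (-19/16) / \<epsilon>^2"
    by (intro divide_right_mono relative_variance_arith[OF L m(2,1)]) simp
  finally show ?thesis unfolding L_def by simp
qed

lemma trunc_mean_trunc_level_ratio_le:
  assumes n: "9 \<le> n" "n \<le> n'"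
  shows "trunc_mean (trunc_level n') / trunc_mean (trunc_level n) \<le> t_seq n' / t_seq n + 1 / t_seq n"
proof -
  define K K' m m' where "K = trunc_level n" and "K' = trunc_level n'"
    and "m = trunc_mean K" and "m' = trunc_mean K'"
  have t: "real n \<le> t_seq n" "t_seq n \<le> t_seq n'" using t_seq_ge[OF n(1)] t_seq_mono[OF n(2)] .
  have KK: "K \<le> K'" unfolding K_def K'_def by (rule trunc_level_mono[OF n(2)])
  have m: "1 \<le> m" using trunc_mean_trunc_level_ge[OF n(1)] ln_ge_2[OF n(1)] unfolding m_def K_def by linarith
  have "m' - m \<le> (real K' - real K) / (real K + 2)"
    unfolding m_def m'_def by (rule trunc_mean_diff_le[OF KK])
  also have "\<dots> \<le> (t_seq n' - t_seq n + 1) / (real K + 2)"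
    using trunc_level_le[of n'] less_trunc_level_plus_1[of n] unfolding K_def K'_def
    by (intro divide_right_mono) auto
  also have "\<dots> \<le> (t_seq n' - t_seq n + 1) / t_seq n"
    using t n less_trunc_level_plus_1[of n] unfolding K_def by (intro divide_left_mono) auto
  finally have dm: "m' - m \<le> (t_seq n' - t_seq n + 1) / t_seq n" .
  have "m' / m = 1 + (m' - m) / m" using m by (simp add: field_simps)
  also have "\<dots> \<le> 1 + (m' - m)"
    using m trunc_mean_mono[OF KK] unfolding m_def m'_def by (simp add: divide_le_eq mult_le_cancel_left1)
  also have "\<dots> \<le> t_seq n' / t_seq n + 1 / t_seq n"
    using dm t n by (simp add: field_simps)
  finally show ?thesis unfolding m_def m'_def K_def K'_def .
qed

lemma t_seq_ratio_le:
  assumes n: "9 \<le> n" "n \<le> n'"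
  shows "t_seq n' / t_seq n \<le> (real n' / real n) * (ln (real n') / ln (real n))"
proof -
  define L L' where "L = ln (real n)" and "L' = ln (real n')"
  have L: "2 \<le> L" "L \<le> L'" unfolding L_def L'_def using ln_ge_2[OF n(1)] n by auto
  have "(L' / L) powr (3/4) \<le> (L' / L) powr 1"
    using L by (intro powr_mono) auto
  then have p: "(L' / L) powr (3/4) \<le> L' / L" using L by simp
  have "t_seq n' / t_seq n = (real n' / real n) * ((L' / L) powr (3/4))"
    using n L(1)[unfolded L_def] unfolding t_seq_def L_def L'_def by (simp add: powr_divide field_simps)
  also have "\<dots> \<le> (real n' / real n) * (L' / L)"
    by (rule mult_left_mono[OF p]) simp
  finally show ?thesis unfolding L_def L'_def .
qed

lemma T_mean_ratio_le:
  assumes n: "9 \<le> n" "n \<le> n'"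
  shows "T_mean n' / T_mean n
    \<le> (real n' / real n) * ((real n' / real n) * (ln (real n') / ln (real n)) + 1 / real n)"
proof -
  have "1 / t_seq n \<le> 1 / real n" using t_seq_ge[OF n(1)] n by (intro divide_left_mono) auto
  then have "trunc_mean (trunc_level n') / trunc_mean (trunc_level n)
      \<le> (real n' / real n) * (ln (real n') / ln (real n)) + 1 / real n"
    using trunc_mean_trunc_level_ratio_le[OF n] t_seq_ratio_le[OF n] by linarith
  then have "(real n' / real n) * (trunc_mean (trunc_level n') / trunc_mean (trunc_level n))
      \<le> (real n' / real n) * ((real n' / real n) * (ln (real n') / ln (real n)) + 1 / real n)"
    by (rule mult_left_mono) simp
  moreover have "T_mean n' / T_mean n
      = (real n' / real n) * (trunc_mean (trunc_level n') / trunc_mean (trunc_level n))"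
    unfolding T_mean_def by simp
  ultimately show ?thesis by simp
qed

section \<open>A sparse subsequence\<close>

text \<open>The subsequence \<open>n\<^sub>k \<approx> exp (k\<^sup>9\<^sup>/\<^sup>1\<^sup>0)\<close> is sparse enough for \<open>(log n\<^sub>k)\<^sup>-\<^sup>1\<^sup>9\<^sup>/\<^sup>1\<^sup>6\<close> to be
  summable and dense enough for \<open>n\<^sub>k\<^sub>+\<^sub>1 / n\<^sub>k \<longrightarrow> 1\<close>.\<close>

definition n_sub :: "nat \<Rightarrow> nat" where
  "n_sub k = nat \<lceil>exp (real k powr (9/10))\<rceil> + 9"

lemma n_sub_bounds:
  "exp (real k powr (9/10)) + 9 \<le> real (n_sub k)" "real (n_sub k) < exp (real k powr (9/10)) + 10"
proof -
  have "real (nat \<lceil>exp (real k powr (9/10))\<rceil>) = of_int \<lceil>exp (real k powr (9/10))\<rceil>" by simp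
  then show "exp (real k powr (9/10)) + 9 \<le> real (n_sub k)" "real (n_sub k) < exp (real k powr (9/10)) + 10"
    unfolding n_sub_def by linarith+
qed

lemma n_sub_ge_9: "9 \<le> n_sub k"
  unfolding n_sub_def by simp

lemma mono_n_sub: "mono n_sub"
proof (rule monoI)
  fix k k' :: nat assume "k \<le> k'"
  then have "\<lceil>exp (real k powr (9/10))\<rceil> \<le> \<lceil>exp (real k' powr (9/10))\<rceil>"
    by (simp add: ceiling_mono powr_mono2)
  then have "nat \<lceil>exp (real k powr (9/10))\<rceil> \<le> nat \<lceil>exp (real k' powr (9/10))\<rceil>"
    by (rule nat_mono)
  then show "n_sub k \<le> n_sub k'" unfolding n_sub_def by simp
qed

lemma filterlim_n_sub: "filterlim n_sub at_top sequentially"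
proof -
  have "filterlim (\<lambda>k. exp (real k powr (9/10))) at_top sequentially" by real_asymp
  then have "eventually (\<lambda>k. real Z \<le> exp (real k powr (9/10))) sequentially" for Z :: nat
    by (simp add: filterlim_at_top)
  then show ?thesis
    unfolding filterlim_at_top using n_sub_bounds(1)
    by (smt (verit) eventually_mono of_nat_le_iff)
qed

lemma ln_n_sub_ge: "real k powr (9/10) \<le> ln (real (n_sub k))"
proof -
  have "real k powr (9/10) = ln (exp (real k powr (9/10)))" by simp
  also have "\<dots> \<le> ln (real (n_sub k))" using n_sub_bounds(1)[of k] by (intro ln_mono) auto
  finally show ?thesis .
qed

lemma ln_n_sub_le: "ln (real (n_sub k)) \<le> real k powr (9/10) + 10"
proof -
  have "1 \<le> exp (real k powr (9/10))" by simp
  then have "real (n_sub k) \<le> 11 * exp (real k powr (9/10))"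
    using n_sub_bounds(2)[of k] by linarith
  then have "ln (real (n_sub k)) \<le> ln (11 * exp (real k powr (9/10)))"
    using n_sub_ge_9[of k] by (intro ln_mono) auto
  also have "\<dots> = ln 11 + real k powr (9/10)" by (simp add: ln_mult)
  finally have "ln (real (n_sub k)) \<le> ln 11 + real k powr (9/10)" .
  moreover have "ln (11::real) \<le> 10" using ln_le_minus_one[of 11] by simp
  ultimately show ?thesis by simp
qed

lemma T_mean_n_sub_ratio_le:
  assumes "k \<ge> 1"
  defines "A \<equiv> (exp (real (Suc k) powr (9/10)) + 10) / exp (real k powr (9/10))"
    and "B \<equiv> (real (Suc k) powr (9/10) + 10) / real k powr (9/10)"
  shows "T_mean (n_sub (Suc k)) / T_mean (n_sub k) \<le> A * (A * B + 1 / exp (real k powr (9/10)))"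
proof -
  define n n' where "n = n_sub k" and "n' = n_sub (Suc k)"
  have n: "9 \<le> n" "n \<le> n'" unfolding n_def n'_def using n_sub_ge_9 mono_n_sub by (auto simp: monoD)
  have a: "real n' / real n \<le> A"
    unfolding A_def n_def n'_def using n_sub_bounds[of k] n_sub_bounds[of "Suc k"]
    by (intro frac_le) auto
  have b: "ln (real n') / ln (real n) \<le> B"
    unfolding B_def n_def n'_def using ln_n_sub_le[of "Suc k"] ln_n_sub_ge[of k] assms
    by (intro frac_le) auto
  have c: "1 / real n \<le> 1 / exp (real k powr (9/10))"
    unfolding n_def using n_sub_bounds(1)[of k] n_sub_ge_9[of k] by (intro divide_left_mono) auto
  have nonneg: "0 \<le> ln (real n') / ln (real n)" "0 \<le> real n' / real n" "0 \<le> 1 / real n"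
    using n by auto
  have "0 \<le> A" using order_trans[OF nonneg(2) a] .
  then have "(real n' / real n) * (ln (real n') / ln (real n)) \<le> A * B"
    using a b nonneg \<open>0 \<le> A\<close> by (intro mult_mono) auto
  then have "(real n' / real n) * (ln (real n') / ln (real n)) + 1 / real n
      \<le> A * B + 1 / exp (real k powr (9/10))"
    using c by linarith
  moreover have "0 \<le> (real n' / real n) * (ln (real n') / ln (real n)) + 1 / real n"
    using nonneg by (intro add_nonneg_nonneg mult_nonneg_nonneg)
  ultimately have "(real n' / real n) * ((real n' / real n) * (ln (real n') / ln (real n)) + 1 / real n)
      \<le> A * (A * B + 1 / exp (real k powr (9/10)))"
    using a \<open>0 \<le> A\<close> by (intro mult_mono)
  then show ?thesis using T_mean_ratio_le[OF n] unfolding n_def n'_def by linarith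
qed

lemma T_mean_n_sub_ratio_tendsto: "(\<lambda>k. T_mean (n_sub (Suc k)) / T_mean (n_sub k)) \<longlonglongrightarrow> 1"
proof -
  define A B C where "A k = (exp (real (Suc k) powr (9/10)) + 10) / exp (real k powr (9/10))"
    and "B k = (real (Suc k) powr (9/10) + 10) / real k powr (9/10)"
    and "C k = 1 / exp (real k powr (9/10))" for k
  have "1 \<le> T_mean (n_sub (Suc k)) / T_mean (n_sub k)" for k
    using T_mean_mono[OF monoD[OF mono_n_sub, of k "Suc k"]] T_mean_pos[OF n_sub_ge_9, of k] by simp
  then have lower: "eventually (\<lambda>k. 1 \<le> T_mean (n_sub (Suc k)) / T_mean (n_sub k)) sequentially"
    by simp
  have upper: "eventually (\<lambda>k. T_mean (n_sub (Suc k)) / T_mean (n_sub k) \<le> A k * (A k * B k + C k)) sequentially"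
    using eventually_ge_at_top[of 1]
    by (rule eventually_mono) (unfold A_def B_def C_def, rule T_mean_n_sub_ratio_le)
  have "A \<longlonglongrightarrow> 1" "B \<longlonglongrightarrow> 1" "C \<longlonglongrightarrow> 0"
    unfolding A_def[abs_def] B_def[abs_def] C_def[abs_def] by real_asymp+
  then have "(\<lambda>k. A k * (A k * B k + C k)) \<longlonglongrightarrow> 1 * (1 * 1 + 0)"
    by (intro tendsto_intros)
  then show ?thesis
    using tendsto_sandwich[OF lower upper tendsto_const] by simp
qed

lemma prob_T_n_sub_deviation_le:
  assumes "k \<ge> 1" "\<epsilon> > 0"
  shows "measure lam {x\<in>space lam. \<epsilon> * T_mean (n_sub k) \<le> \<bar>T (n_sub k) (t_seq (n_sub k)) x - T_mean (n_sub k)\<bar>}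
    \<le> 300 / \<epsilon>^2 * real k powr (-171/160)"
proof -
  have "ln (real (n_sub k)) powr (-19/16) \<le> (real k powr (9/10)) powr (-19/16)"
    using assms ln_n_sub_ge[of k] by (intro powr_mono2') auto
  also have "\<dots> = real k powr (-171/160)" by (simp add: powr_powr)
  finally have "300 / \<epsilon>^2 * ln (real (n_sub k)) powr (-19/16) \<le> 300 / \<epsilon>^2 * real k powr (-171/160)"
    by (rule mult_left_mono) simp
  then show ?thesis using prob_T_deviation_le[OF n_sub_ge_9 assms(2), of k] by linarith
qed

lemma AE_eventually_T_n_sub_close:
  assumes e: "\<epsilon> > 0"
  shows "AE x in lam. eventually (\<lambda>k. \<bar>T (n_sub k) (t_seq (n_sub k)) x - T_mean (n_sub k)\<bar>
    < \<epsilon> * T_mean (n_sub k)) sequentially"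
proof -
  define A where "A k = {x\<in>space lam. \<epsilon> * T_mean (n_sub k) \<le> \<bar>T (n_sub k) (t_seq (n_sub k)) x - T_mean (n_sub k)\<bar>}" for k
  have "summable (\<lambda>k. measure lam (A k))"
  proof (rule summable_comparison_test_ev)
    show "summable (\<lambda>k. 300 / \<epsilon>^2 * real k powr (-171/160))"
      by (intro summable_mult) (simp add: summable_real_powr_iff)
    show "eventually (\<lambda>k. norm (measure lam (A k)) \<le> 300 / \<epsilon>^2 * real k powr (-171/160)) sequentially"
      using eventually_ge_at_top[of 1]
      by (rule eventually_mono) (use prob_T_n_sub_deviation_le[OF _ e] in \<open>simp add: A_def\<close>)
  qed
  moreover have "A k \<in> sets lam" for k unfolding A_def by measurable
  ultimately have "AE x in lam. eventually (\<lambda>k. x \<in> space lam - A k) sequentially"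
    by (intro borel_cantelli_AE1) (auto simp: less_top[symmetric])
  then show ?thesis
    by (rule eventually_mono) (auto simp: A_def elim: eventually_mono)
qed

lemma AE_T_n_sub_tendsto: "AE x in lam. (\<lambda>k. T (n_sub k) (t_seq (n_sub k)) x / T_mean (n_sub k)) \<longlonglongrightarrow> 1"
proof -
  have "AE x in lam. \<forall>j::nat. eventually (\<lambda>k. \<bar>T (n_sub k) (t_seq (n_sub k)) x - T_mean (n_sub k)\<bar>
      < 1 / real (Suc j) * T_mean (n_sub k)) sequentially"
    unfolding AE_all_countable by (intro allI AE_eventually_T_n_sub_close) simp
  then show ?thesis
  proof (rule eventually_mono)
    fix x assume close: "\<forall>j::nat. eventually (\<lambda>k. \<bar>T (n_sub k) (t_seq (n_sub k)) x - T_mean (n_sub k)\<bar>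
      < 1 / real (Suc j) * T_mean (n_sub k)) sequentially"
    show "(\<lambda>k. T (n_sub k) (t_seq (n_sub k)) x / T_mean (n_sub k)) \<longlonglongrightarrow> 1"
      unfolding tendsto_iff
    proof (intro allI impI)
      fix e :: real assume "e > 0"
      then obtain j where j: "inverse (real (Suc j)) < e" using reals_Archimedean by blast
      show "eventually (\<lambda>k. dist (T (n_sub k) (t_seq (n_sub k)) x / T_mean (n_sub k)) 1 < e) sequentially"
        using close[rule_format, of j]
      proof (rule eventually_mono)
        fix k
        assume "\<bar>T (n_sub k) (t_seq (n_sub k)) x - T_mean (n_sub k)\<bar> < 1 / real (Suc j) * T_mean (n_sub k)"
        moreover have pos: "0 < T_mean (n_sub k)" by (rule T_mean_pos[OF n_sub_ge_9])
        moreover have "1 / real (Suc j) * T_mean (n_sub k) < e * T_mean (n_sub k)"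
          using j pos by (intro mult_strict_right_mono) (auto simp: inverse_eq_divide)
        ultimately have "\<bar>T (n_sub k) (t_seq (n_sub k)) x - T_mean (n_sub k)\<bar> < e * T_mean (n_sub k)"
          by linarith
        then have "\<bar>T (n_sub k) (t_seq (n_sub k)) x - T_mean (n_sub k)\<bar> / T_mean (n_sub k) < e"
          using pos by (simp add: pos_divide_less_eq)
        moreover have "dist (T (n_sub k) (t_seq (n_sub k)) x / T_mean (n_sub k)) 1
            = \<bar>T (n_sub k) (t_seq (n_sub k)) x - T_mean (n_sub k)\<bar> / T_mean (n_sub k)"
          using pos by (simp add: dist_real_def field_simps)
        ultimately show "dist (T (n_sub k) (t_seq (n_sub k)) x / T_mean (n_sub k)) 1 < e" by simp
      qed
    qed
  qed
qed

section \<open>Interpolation between the subsequence terms\<close>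

lemma obtain_block_index:
  fixes N :: "nat \<Rightarrow> nat"
  assumes N_mono: "mono N" and N_lim: "filterlim N at_top sequentially"
  obtains \<kappa> where "\<And>n. N 0 \<le> n \<Longrightarrow> N (\<kappa> n) \<le> n" "\<And>n. n < N (Suc (\<kappa> n))"
    "filterlim \<kappa> at_top sequentially"
proof
  define \<kappa> where "\<kappa> n = (LEAST k. n < N (Suc k))" for n
  have ex: "\<exists>k. n < N (Suc k)" for n
  proof -
    obtain M where "\<forall>k\<ge>M. Suc n \<le> N k"
      using N_lim by (auto simp: filterlim_at_top eventually_sequentially)
    then have "n < N (Suc M)" by (simp add: Suc_le_eq)
    then show ?thesis by blast
  qed
  show upper: "n < N (Suc (\<kappa> n))" for n
    unfolding \<kappa>_def by (rule LeastI_ex[OF ex])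
  show "N (\<kappa> n) \<le> n" if "N 0 \<le> n" for n
  proof (cases "\<kappa> n")
    case (Suc j)
    then have "\<not> n < N (Suc j)" unfolding \<kappa>_def by (metis lessI not_less_Least)
    then show ?thesis using Suc by simp
  qed (use that in simp)
  show "filterlim \<kappa> at_top sequentially"
    unfolding filterlim_at_top eventually_sequentially
  proof (intro allI exI impI)
    fix K n assume "N K \<le> n"
    show "K \<le> \<kappa> n"
    proof (rule ccontr)
      assume "\<not> K \<le> \<kappa> n"
      then have "N (Suc (\<kappa> n)) \<le> N K" using N_mono by (simp add: monoD)
      then show False using upper[of n] \<open>N K \<le> n\<close> by simp
    qed
  qed
qed

lemma ratio_between_monotone:
  fixes s \<mu> :: "nat \<Rightarrow> real"
  assumes "mono s" "mono \<mu>" "0 \<le> s a" "0 < \<mu> a" "a \<le> n" "n \<le> b"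
  shows "s a / \<mu> b \<le> s n / \<mu> n" "s n / \<mu> n \<le> s b / \<mu> a"
proof -
  have s: "s a \<le> s n" "s n \<le> s b" and \<mu>: "\<mu> a \<le> \<mu> n" "\<mu> n \<le> \<mu> b"
    using assms by (auto simp: monoD)
  have "s a / \<mu> b \<le> s a / \<mu> n" using assms(3,4) \<mu> by (intro divide_left_mono) auto
  also have "\<dots> \<le> s n / \<mu> n" using assms(4) s \<mu> by (intro divide_right_mono) auto
  finally show "s a / \<mu> b \<le> s n / \<mu> n" .
  have "s n / \<mu> n \<le> s b / \<mu> n" using assms(4) s \<mu> by (intro divide_right_mono) auto
  also have "\<dots> \<le> s b / \<mu> a" using assms(3,4) s \<mu> by (intro divide_left_mono) auto
  finally show "s n / \<mu> n \<le> s b / \<mu> a" .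
qed

text \<open>
  For \<open>N k \<le> n < N (k + 1)\<close> the ratio \<open>s n / \<mu> n\<close> is squeezed between \<open>s (N k) / \<mu> (N (k + 1))\<close>
  and \<open>s (N (k + 1)) / \<mu> (N k)\<close>, and both bounds tend to 1.
\<close>

lemma monotone_ratio_tendsto_from_subseq:
  fixes s \<mu> :: "nat \<Rightarrow> real" and N :: "nat \<Rightarrow> nat"
  assumes "mono s" "mono \<mu>" and s_nonneg: "\<And>n. 0 \<le> s n" and \<mu>_pos: "\<And>n. N 0 \<le> n \<Longrightarrow> 0 < \<mu> n"
    and N_mono: "mono N" and N_lim: "filterlim N at_top sequentially"
    and lim_sub: "(\<lambda>k. s (N k) / \<mu> (N k)) \<longlonglongrightarrow> 1"
    and lim_ratio: "(\<lambda>k. \<mu> (N (Suc k)) / \<mu> (N k)) \<longlonglongrightarrow> 1"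
  shows "(\<lambda>n. s n / \<mu> n) \<longlonglongrightarrow> 1"
proof -
  obtain \<kappa> where \<kappa>_le: "\<And>n. N 0 \<le> n \<Longrightarrow> N (\<kappa> n) \<le> n"
    and less_\<kappa>: "\<And>n. n < N (Suc (\<kappa> n))" and \<kappa>_lim: "filterlim \<kappa> at_top sequentially"
    using obtain_block_index[OF N_mono N_lim] by blast
  have \<mu>_N_pos: "0 < \<mu> (N k)" for k using \<mu>_pos N_mono by (simp add: monoD)
  have \<mu>_N_nonzero: "\<mu> (N k) \<noteq> 0" for k using \<mu>_N_pos[of k] by simp
  define u l where "u k = s (N (Suc k)) / \<mu> (N k)" and "l k = s (N k) / \<mu> (N (Suc k))" for k
  have "(\<lambda>k. (s (N (Suc k)) / \<mu> (N (Suc k))) * (\<mu> (N (Suc k)) / \<mu> (N k))) \<longlonglongrightarrow> 1 * 1"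
    by (intro tendsto_mult lim_ratio LIMSEQ_Suc[OF lim_sub])
  then have "u \<longlonglongrightarrow> 1" unfolding u_def by (simp add: \<mu>_N_nonzero)
  then have u: "(\<lambda>n. u (\<kappa> n)) \<longlonglongrightarrow> 1" by (rule filterlim_compose[OF _ \<kappa>_lim])
  have "(\<lambda>k. (s (N k) / \<mu> (N k)) / (\<mu> (N (Suc k)) / \<mu> (N k))) \<longlonglongrightarrow> 1 / 1"
    by (intro tendsto_divide lim_sub lim_ratio) simp
  then have "l \<longlonglongrightarrow> 1" unfolding l_def by (simp add: \<mu>_N_nonzero)
  then have l: "(\<lambda>n. l (\<kappa> n)) \<longlonglongrightarrow> 1" by (rule filterlim_compose[OF _ \<kappa>_lim])
  have "eventually (\<lambda>n. l (\<kappa> n) \<le> s n / \<mu> n \<and> s n / \<mu> n \<le> u (\<kappa> n)) sequentially"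
    using eventually_ge_at_top[of "N 0"]
  proof (rule eventually_mono)
    fix n assume "N 0 \<le> n"
    then show "l (\<kappa> n) \<le> s n / \<mu> n \<and> s n / \<mu> n \<le> u (\<kappa> n)"
      using ratio_between_monotone[OF assms(1,2) s_nonneg \<mu>_N_pos \<kappa>_le less_imp_le[OF less_\<kappa>]]
      unfolding u_def l_def by blast
  qed
  then have "eventually (\<lambda>n. l (\<kappa> n) \<le> s n / \<mu> n) sequentially"
    and "eventually (\<lambda>n. s n / \<mu> n \<le> u (\<kappa> n)) sequentially"
    by (simp_all add: eventually_conj_iff)
  then show ?thesis using l u by (rule tendsto_sandwich)
qed

theorem mainTheorem7:
  shows "AE x in lam.
    (\<lambda>n. T n (t_seq n) x / (\<integral>y. T n (t_seq n) y \<partial>lam)) \<longlonglongrightarrow> 1"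
proof -
  have "AE x in lam. (\<lambda>n. T n (t_seq n) x / T_mean n) \<longlonglongrightarrow> 1"
    using AE_T_n_sub_tendsto AE_space
  proof eventually_elim
    case (elim x)
    show ?case
    proof (rule monotone_ratio_tendsto_from_subseq[where N = n_sub])
      show "mono (\<lambda>n. T n (t_seq n) x)" using elim by (intro monoI T_t_seq_mono) auto
      show "\<And>n. n_sub 0 \<le> n \<Longrightarrow> 0 < T_mean n"
        using n_sub_ge_9[of 0] T_mean_pos by force
    qed (use elim in \<open>auto intro: monoI simp: T_t_seq_nonneg T_mean_mono mono_n_sub filterlim_n_sub
        T_mean_n_sub_ratio_tendsto\<close>)
  qed
  then show ?thesis by (simp add: integral_T_t_seq)
qed

end
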